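(* Let $\varphi\in\mathbb{B}$. Then for every fixed $x\in\mathbb{R}$, the function $y\mapsto\varphi(x+iy)$ belongs to $L^2(\mathbb{R},e^{-y^2}dy)$, i.e. $\int_{\mathbb{R}}|\varphi(x+iy)|^2e^{-y^2}\,dy<\infty$.
   Context: The Bargmann space is $\mathbb{B}=\{\varphi:\mathbb{C}\to\mathbb{C}\text{ entire};\ \int_{\mathbb{C}}|\varphi(z)|^2e^{-|z|^2}\,dx\,dy<\infty\}$, $z=x+iy$. *)

theory Defs
  imports "HOL-Complex_Analysis.Complex_Analysis"
begin

definition Bargmann :: "(complex \<Rightarrow> complex) set" where
  "Bargmann = {\<phi>. \<phi> holomorphic_on UNIV \<and>
      integrable lborel (\<lambda>z::complex. (cmod (\<phi> z))\<^sup>2 * exp (- (cmod z)\<^sup>2))}"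

end

theory Submission
  imports Defs
begin

text \<open>The entire function f(w) = (\<phi>(w) exp(w^2/2))^2 satisfies
  |f(u + iv)| = |\<phi>(u + iv)|^2 exp(u^2 - v^2), so the claim is that v \<mapsto> |f(x + iv)| is
  integrable, while the Bargmann condition says that G(u) = \<integral> |f(u + iv)| dv is integrable
  against exp(-2u^2), hence locally integrable. Cauchy's formula on the square of side 2s centred
  at z bounds |f(z)| by 1/\<pi> times the sum of the means of |f| over the four sides. Integrating
  over the vertical line through x, the vertical sides contribute G(x - s) + G(x + s) and the
  horizontal ones (1/s) \<integral> G over [x - s, x + s]. As G is finite almost everywhere, some small
  s > 0 has G(x \<plusminus> s) finite.\<close>

lemma measurable_Complex [measurable (raw)]:
  "f \<in> borel_measurable M \<Longrightarrow> g \<in> borel_measurable M \<Longrightarrow>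
    (\<lambda>x. Complex (f x) (g x)) \<in> borel_measurable M"
  unfolding Complex_eq by (intro borel_measurable_add borel_measurable_times) auto

lemma holomorphic_on_UNIV_imp_borel_measurable:
  "f holomorphic_on UNIV \<Longrightarrow> f \<in> borel_measurable borel"
  using holomorphic_on_imp_continuous_on borel_measurable_continuous_onI by blast

lemma lborel_complex_eq_distr_pair:
  "(lborel :: complex measure) = distr (lborel \<Otimes>\<^sub>M lborel) borel (\<lambda>(u, v). Complex u v)"
proof (rule lborel_eqI)
  fix l u :: complex
  assume le: "\<And>b. b \<in> Basis \<Longrightarrow> l \<bullet> b \<le> u \<bullet> b"
  have "Re l \<le> Re u" "Im l \<le> Im u"
    using le[of 1] le[of \<i>] by (auto simp: Basis_complex_def)
  have preimage: "(\<lambda>(a, b). Complex a b) -` box l u \<inter> space (lborel \<Otimes>\<^sub>M lborel)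
      = {Re l<..<Re u} \<times> {Im l<..<Im u}"
    by (auto simp: in_box_complex_iff space_pair_measure)
  have "(\<lambda>(a, b). Complex a b) \<in> measurable (lborel \<Otimes>\<^sub>M lborel) borel"
    by measurable
  then show "emeasure (distr (lborel \<Otimes>\<^sub>M lborel) borel (\<lambda>(a, b). Complex a b)) (box l u)
      = (\<Prod>b\<in>Basis. (u - l) \<bullet> b)"
    using \<open>Re l \<le> Re u\<close> \<open>Im l \<le> Im u\<close>
    by (simp add: emeasure_distr preimage lborel.emeasure_pair_measure_Times
        Basis_complex_def ennreal_mult)
qed simp

lemma nn_integral_lborel_complex:
  assumes [measurable]: "f \<in> borel_measurable borel"
  shows "(\<integral>\<^sup>+z. f z \<partial>lborel) = (\<integral>\<^sup>+u. (\<integral>\<^sup>+v. f (Complex u v) \<partial>lborel) \<partial>lborel)"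
  by (subst lborel_complex_eq_distr_pair)
     (simp add: nn_integral_distr case_prod_beta lborel.nn_integral_fst[symmetric])

lemma norm_contour_integral_linepath_le:
  fixes f :: "complex \<Rightarrow> complex"
  assumes contf: "continuous_on (closed_segment a b) f" and "s > 0"
    and far: "\<And>t. t \<in> {0..1} \<Longrightarrow> s \<le> cmod (linepath a b t - z)"
  obtains J where "((\<lambda>w. f w / (w - z)) has_contour_integral J) (linepath a b)"
    "cmod J \<le> cmod (b - a) / s * integral {0..1} (\<lambda>t. cmod (f (linepath a b t)))"
proof -
  have "z \<notin> closed_segment a b"
    using far \<open>s > 0\<close> by (force simp: path_image_linepath[symmetric] path_image_def)
  then have "continuous_on (closed_segment a b) (\<lambda>w. f w / (w - z))"
    by (intro continuous_intros contf) auto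
  then obtain J where J: "((\<lambda>w. f w / (w - z)) has_contour_integral J) (linepath a b)"
    using contour_integrable_continuous_linepath has_contour_integral_integral by blast
  then have J01: "((\<lambda>t. f (linepath a b t) / (linepath a b t - z) * (b - a)) has_integral J) {0..1}"
    by (simp add: has_contour_integral_linepath)
  have contl: "continuous_on {0..1} (\<lambda>t. cmod (f (linepath a b t)))"
    by (intro continuous_intros continuous_on_compose2[OF contf])
      (auto simp: path_image_linepath[symmetric] path_image_def)
  have "cmod J \<le> integral {0..1} (\<lambda>t. cmod (b - a) / s * cmod (f (linepath a b t)))"
    unfolding integral_unique[OF J01, symmetric]
  proof (rule integral_norm_bound_integral)
    show "(\<lambda>t. f (linepath a b t) / (linepath a b t - z) * (b - a)) integrable_on {0..1}"
      using J01 by blast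
    show "(\<lambda>t. cmod (b - a) / s * cmod (f (linepath a b t))) integrable_on {0..1}"
      by (intro integrable_continuous_interval continuous_intros contl)
    fix t :: real assume "t \<in> {0..1}"
    then have "s \<le> cmod (linepath a b t - z)"
      by (rule far)
    then have "cmod (f (linepath a b t)) / cmod (linepath a b t - z) \<le> cmod (f (linepath a b t)) / s"
      using \<open>s > 0\<close> by (intro divide_left_mono) (auto intro!: mult_pos_pos)
    then have "cmod (b - a) * (cmod (f (linepath a b t)) / cmod (linepath a b t - z))
        \<le> cmod (b - a) * (cmod (f (linepath a b t)) / s)"
      by (rule mult_left_mono) simp
    then show "cmod (f (linepath a b t) / (linepath a b t - z) * (b - a))
        \<le> cmod (b - a) / s * cmod (f (linepath a b t))"
      by (simp add: norm_mult norm_divide mult.commute)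
  qed
  then show thesis
    using J by (intro that) auto
qed

lemma norm_contour_integral_square_side_le:
  fixes f :: "complex \<Rightarrow> complex"
  assumes "continuous_on UNIV f" "s > 0" "cmod (b - a) = 2 * s"
    and "Re a = Re b \<and> \<bar>Re a - Re z\<bar> = s \<or> Im a = Im b \<and> \<bar>Im a - Im z\<bar> = s"
  obtains J where "((\<lambda>w. f w / (w - z)) has_contour_integral J) (linepath a b)"
    "cmod J \<le> 2 * integral {0..1} (\<lambda>t. cmod (f (linepath a b t)))"
proof -
  have "s \<le> cmod (linepath a b t - z)" for t
    using assms(4) abs_Re_le_cmod[of "linepath a b t - z"] abs_Im_le_cmod[of "linepath a b t - z"]
    by (auto simp: linepath_def algebra_simps)
  moreover have "continuous_on (closed_segment a b) f"
    using assms(1) continuous_on_subset by blast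
  ultimately obtain J where "((\<lambda>w. f w / (w - z)) has_contour_integral J) (linepath a b)"
      "cmod J \<le> cmod (b - a) / s * integral {0..1} (\<lambda>t. cmod (f (linepath a b t)))"
    using norm_contour_integral_linepath_le \<open>s > 0\<close> by blast
  then show thesis
    using that assms(2,3) by simp
qed

lemma Cauchy_integral_formula_rectpath:
  assumes "f holomorphic_on UNIV" and "z \<in> box a b"
  shows "((\<lambda>w. f w / (w - z)) has_contour_integral 2 * pi * \<i> * f z) (rectpath a b)"
proof -
  have "z \<notin> path_image (rectpath a b)"
    using path_image_rectpath_inter_box[of a b] assms(2) by (auto simp: in_box_complex_iff)
  then show ?thesis
    using Cauchy_integral_formula_convex_simple[OF convex_UNIV assms(1), of z "rectpath a b"]
      winding_number_rectpath[OF assms(2)] by auto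
qed

lemma norm_le_square_boundary_integrals:
  fixes f :: "complex \<Rightarrow> complex"
  assumes holf: "f holomorphic_on UNIV" and "s > 0"
  shows "cmod (f (Complex x y)) \<le>
    (integral {0..1} (\<lambda>t. cmod (f (Complex (x - s + 2 * s * t) (y - s)))) +
     integral {0..1} (\<lambda>t. cmod (f (Complex (x - s + 2 * s * t) (y + s)))) +
     integral {0..1} (\<lambda>t. cmod (f (Complex (x - s) (y - s + 2 * s * t)))) +
     integral {0..1} (\<lambda>t. cmod (f (Complex (x + s) (y - s + 2 * s * t))))) / pi"
proof -
  define z where "z = Complex x y"
  define ll lr ur ul where "ll = Complex (x - s) (y - s)" and "lr = Complex (x + s) (y - s)"
    and "ur = Complex (x + s) (y + s)" and "ul = Complex (x - s) (y + s)"
  let ?g = "\<lambda>w. f w / (w - z)"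
  let ?bound = "\<lambda>a b. 2 * integral {0..1} (\<lambda>t. cmod (f (linepath a b t)))"
  have contf: "continuous_on UNIV f"
    using holf holomorphic_on_imp_continuous_on by blast
  have "sqrt (4 * s\<^sup>2) = 2 * s" using \<open>s > 0\<close> by (simp add: real_sqrt_mult)
  then have lengths: "cmod (lr - ll) = 2 * s" "cmod (ur - lr) = 2 * s"
      "cmod (ur - ul) = 2 * s" "cmod (ul - ll) = 2 * s"
    by (simp_all add: ll_def lr_def ur_def ul_def complex_norm complex_diff)
  obtain J\<^sub>b where bottom: "(?g has_contour_integral J\<^sub>b) (linepath ll lr)" "cmod J\<^sub>b \<le> ?bound ll lr"
    using norm_contour_integral_square_side_le[where z = z, OF contf \<open>s > 0\<close> lengths(1)] \<open>s > 0\<close>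
    by (auto simp: ll_def lr_def z_def)
  obtain J\<^sub>r where right: "(?g has_contour_integral J\<^sub>r) (linepath lr ur)" "cmod J\<^sub>r \<le> ?bound lr ur"
    using norm_contour_integral_square_side_le[where z = z, OF contf \<open>s > 0\<close> lengths(2)] \<open>s > 0\<close>
    by (auto simp: lr_def ur_def z_def)
  obtain J\<^sub>t where top: "(?g has_contour_integral J\<^sub>t) (linepath ul ur)" "cmod J\<^sub>t \<le> ?bound ul ur"
    using norm_contour_integral_square_side_le[where z = z, OF contf \<open>s > 0\<close> lengths(3)] \<open>s > 0\<close>
    by (auto simp: ul_def ur_def z_def)
  obtain J\<^sub>l where left: "(?g has_contour_integral J\<^sub>l) (linepath ll ul)" "cmod J\<^sub>l \<le> ?bound ll ul"
    using norm_contour_integral_square_side_le[where z = z, OF contf \<open>s > 0\<close> lengths(4)] \<open>s > 0\<close>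
    by (auto simp: ll_def ul_def z_def)
  have "(?g has_contour_integral - J\<^sub>t) (linepath ur ul)" "(?g has_contour_integral - J\<^sub>l) (linepath ul ll)"
    using has_contour_integral_reversepath[OF _ top(1)] has_contour_integral_reversepath[OF _ left(1)]
    by auto
  then have "(?g has_contour_integral J\<^sub>b + (J\<^sub>r + (- J\<^sub>t + - J\<^sub>l)))
      (linepath ll lr +++ linepath lr ur +++ linepath ur ul +++ linepath ul ll)"
    by (intro has_contour_integral_join bottom(1) right(1) valid_path_join) auto
  moreover have "rectpath ll ur = linepath ll lr +++ linepath lr ur +++ linepath ur ul +++ linepath ul ll"
    by (simp add: rectpath_def Let_def ll_def lr_def ur_def ul_def)
  ultimately have boundary: "(?g has_contour_integral J\<^sub>b + J\<^sub>r - J\<^sub>t - J\<^sub>l) (rectpath ll ur)"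
    by (simp add: algebra_simps)
  have "z \<in> box ll ur"
    using \<open>s > 0\<close> by (simp add: in_box_complex_iff z_def ll_def ur_def)
  then have "(?g has_contour_integral 2 * pi * \<i> * f z) (rectpath ll ur)"
    by (rule Cauchy_integral_formula_rectpath[OF holf])
  then have "2 * pi * cmod (f z) = cmod (J\<^sub>b + J\<^sub>r - J\<^sub>t - J\<^sub>l)"
    using has_contour_integral_unique[OF _ boundary] by (simp add: norm_mult)
  also have "\<dots> \<le> cmod J\<^sub>b + cmod J\<^sub>r + cmod J\<^sub>t + cmod J\<^sub>l"
    using norm_triangle_ineq4[of "J\<^sub>b + J\<^sub>r - J\<^sub>t" J\<^sub>l] norm_triangle_ineq4[of "J\<^sub>b + J\<^sub>r" J\<^sub>t]
      norm_triangle_ineq[of J\<^sub>b J\<^sub>r] by linarith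
  also have "\<dots> \<le> ?bound ll lr + ?bound ul ur + ?bound ll ul + ?bound lr ur"
    using bottom(2) right(2) top(2) left(2) by linarith
  finally have "2 * pi * cmod (f z) \<le> ?bound ll lr + ?bound ul ur + ?bound ll ul + ?bound lr ur" .
  moreover have "linepath ll lr = (\<lambda>t. Complex (x - s + 2 * s * t) (y - s))"
      "linepath ul ur = (\<lambda>t. Complex (x - s + 2 * s * t) (y + s))"
      "linepath ll ul = (\<lambda>t. Complex (x - s) (y - s + 2 * s * t))"
      "linepath lr ur = (\<lambda>t. Complex (x + s) (y - s + 2 * s * t))"
    by (simp_all add: fun_eq_iff linepath_def complex_eq_iff ll_def lr_def ur_def ul_def algebra_simps)
  ultimately show ?thesis
    using pi_gt_zero by (simp add: z_def field_simps)
qed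

lemma nn_integral_indicator_eq_integral:
  fixes h :: "real \<Rightarrow> real"
  assumes "continuous_on {a..b} h" "\<And>t. t \<in> {a..b} \<Longrightarrow> 0 \<le> h t"
  shows "(\<integral>\<^sup>+t. ennreal (h t) * indicator {a..b} t \<partial>lborel) = ennreal (integral {a..b} h)"
  using assms by (intro nn_integral_has_integral_lebesgue' integrable_integral integrable_continuous_interval)

lemma ennreal_norm_le_square_boundary_nn_integrals:
  fixes f :: "complex \<Rightarrow> complex"
  assumes holf: "f holomorphic_on UNIV" and "s > 0"
  shows "ennreal (cmod (f (Complex x y))) \<le> ennreal (1 / pi) *
    ((\<integral>\<^sup>+t. ennreal (cmod (f (Complex (x - s + 2 * s * t) (y - s)))) * indicator {0..1} t \<partial>lborel) +
     (\<integral>\<^sup>+t. ennreal (cmod (f (Complex (x - s + 2 * s * t) (y + s)))) * indicator {0..1} t \<partial>lborel) +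
     (\<integral>\<^sup>+t. ennreal (cmod (f (Complex (x - s) (y - s + 2 * s * t)))) * indicator {0..1} t \<partial>lborel) +
     (\<integral>\<^sup>+t. ennreal (cmod (f (Complex (x + s) (y - s + 2 * s * t)))) * indicator {0..1} t \<partial>lborel))"
proof -
  have contf: "continuous_on UNIV f"
    using holf holomorphic_on_imp_continuous_on by blast
  have edge: "(\<integral>\<^sup>+t. ennreal (cmod (f (Complex (p t) (q t)))) * indicator {0..1} t \<partial>lborel)
      = ennreal (integral {0..1} (\<lambda>t. cmod (f (Complex (p t) (q t)))))"
    "0 \<le> integral {0..1} (\<lambda>t. cmod (f (Complex (p t) (q t))))"
    if "continuous_on UNIV p" "continuous_on UNIV q" for p q :: "real \<Rightarrow> real"
  proof -
    have "continuous_on {0..1} (\<lambda>t. cmod (f (Complex (p t) (q t))))"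
      unfolding Complex_eq using that
      by (intro continuous_intros continuous_on_compose2[OF contf]) (auto intro: continuous_on_subset)
    then show "(\<integral>\<^sup>+t. ennreal (cmod (f (Complex (p t) (q t)))) * indicator {0..1} t \<partial>lborel)
        = ennreal (integral {0..1} (\<lambda>t. cmod (f (Complex (p t) (q t)))))"
      "0 \<le> integral {0..1} (\<lambda>t. cmod (f (Complex (p t) (q t))))"
      by (auto intro: nn_integral_indicator_eq_integral integral_nonneg integrable_continuous_interval)
  qed
  let ?I = "\<lambda>p q. integral {0..1} (\<lambda>t. cmod (f (Complex (p t) (q t))))"
  have "ennreal (cmod (f (Complex x y))) \<le> ennreal ((?I (\<lambda>t. x - s + 2 * s * t) (\<lambda>t. y - s) +
      ?I (\<lambda>t. x - s + 2 * s * t) (\<lambda>t. y + s) + ?I (\<lambda>t. x - s) (\<lambda>t. y - s + 2 * s * t) +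
      ?I (\<lambda>t. x + s) (\<lambda>t. y - s + 2 * s * t)) / pi)"
    using norm_le_square_boundary_integrals[OF assms] by (rule ennreal_leI)
  also have "\<dots> = ennreal (1 / pi) * (ennreal (?I (\<lambda>t. x - s + 2 * s * t) (\<lambda>t. y - s)) +
      ennreal (?I (\<lambda>t. x - s + 2 * s * t) (\<lambda>t. y + s)) + ennreal (?I (\<lambda>t. x - s) (\<lambda>t. y - s + 2 * s * t)) +
      ennreal (?I (\<lambda>t. x + s) (\<lambda>t. y - s + 2 * s * t)))"
    by (simp add: edge continuous_intros ennreal_mult[symmetric] ennreal_plus[symmetric] del: ennreal_plus)
  finally show ?thesis
    by (simp add: edge continuous_intros)
qed

lemma nn_integral_affine_unit_interval_le:
  fixes g :: "real \<Rightarrow> ennreal"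
  assumes [measurable]: "g \<in> borel_measurable borel" "S \<in> sets borel"
    and "c \<noteq> 0" and "{min a (a + c)..max a (a + c)} \<subseteq> S"
  shows "(\<integral>\<^sup>+t. g (a + c * t) * indicator {0..1} t \<partial>lborel)
    \<le> ennreal (1 / \<bar>c\<bar>) * (\<integral>\<^sup>+u. g u * indicator S u \<partial>lborel)"
proof -
  have "indicator {0..1} t \<le> (indicator S (a + c * t) :: ennreal)" for t
    using assms(4) \<open>c \<noteq> 0\<close>
    by (auto simp: indicator_def min_def max_def mult_le_cancel_left1 mult_le_0_iff split: if_splits)
  then have "(\<integral>\<^sup>+t. g (a + c * t) * indicator {0..1} t \<partial>lborel)
      \<le> (\<integral>\<^sup>+t. g (a + c * t) * indicator S (a + c * t) \<partial>lborel)"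
    by (intro nn_integral_mono mult_left_mono) auto
  also have "\<dots> = ennreal (1 / \<bar>c\<bar>) * (\<integral>\<^sup>+u. g u * indicator S u \<partial>lborel)"
    using nn_integral_real_affine[of "\<lambda>u. g u * indicator S u" c a] \<open>c \<noteq> 0\<close>
    by (simp add: mult.assoc[symmetric] ennreal_mult[symmetric])
  finally show ?thesis .
qed

lemma nn_integral_vertical_translate:
  fixes F :: "complex \<Rightarrow> ennreal" and p q :: "real \<Rightarrow> real"
  assumes [measurable]: "F \<in> borel_measurable borel" "p \<in> borel_measurable borel" "q \<in> borel_measurable borel"
  shows "(\<integral>\<^sup>+y. (\<integral>\<^sup>+t. F (Complex (p t) (y + q t)) * indicator {0..1} t \<partial>lborel) \<partial>lborel)
       = (\<integral>\<^sup>+t. (\<integral>\<^sup>+v. F (Complex (p t) v) \<partial>lborel) * indicator {0..1} t \<partial>lborel)"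
proof -
  have "(\<integral>\<^sup>+y. (\<integral>\<^sup>+t. F (Complex (p t) (y + q t)) * indicator {0..1} t \<partial>lborel) \<partial>lborel)
      = (\<integral>\<^sup>+t. (\<integral>\<^sup>+y. F (Complex (p t) (y + q t)) \<partial>lborel) * indicator {0..1} t \<partial>lborel)"
    by (subst lborel_pair.Fubini') (simp_all add: nn_integral_multc)
  also have "\<dots> = (\<integral>\<^sup>+t. (\<integral>\<^sup>+v. F (Complex (p t) v) \<partial>lborel) * indicator {0..1} t \<partial>lborel)"
  proof -
    have "(\<integral>\<^sup>+y. F (Complex (p t) (y + q t)) \<partial>lborel) = (\<integral>\<^sup>+v. F (Complex (p t) v) \<partial>lborel)" for t
      using nn_integral_real_affine[of "\<lambda>v. F (Complex (p t) v)" 1 "q t"] by (simp add: add.commute)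
    then show ?thesis
      by simp
  qed
  finally show ?thesis .
qed

lemma ex_finite_value_if_nn_integral_unit_interval_finite:
  fixes g :: "real \<Rightarrow> ennreal"
  assumes "(\<integral>\<^sup>+t. g t * indicator {0..1} t \<partial>lborel) < \<infinity>"
  obtains t where "0 < t" "t < 1" "g t < \<infinity>"
proof (rule ccontr)
  assume "\<not> thesis"
  then have "\<infinity> * indicator {0<..<1::real} t \<le> g t * indicator {0..1} t" for t
    using that by (force simp: indicator_def less_top[symmetric])
  then have "(\<integral>\<^sup>+t. \<infinity> * indicator {0<..<1::real} t \<partial>lborel) \<le> (\<integral>\<^sup>+t. g t * indicator {0..1} t \<partial>lborel)"
    by (rule nn_integral_mono)
  then show False
    using assms by (simp add: nn_integral_cmult_indicator ennreal_mult_top)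
qed

lemma nn_integral_vertical_line_le:
  fixes f :: "complex \<Rightarrow> complex"
  defines "G \<equiv> \<lambda>u. \<integral>\<^sup>+v. ennreal (cmod (f (Complex u v))) \<partial>lborel"
  assumes holf: "f holomorphic_on UNIV" and "s > 0"
    and [measurable]: "S \<in> sets borel" and "{x - s..x + s} \<subseteq> S"
  shows "(\<integral>\<^sup>+y. ennreal (cmod (f (Complex x y))) \<partial>lborel) \<le>
    ennreal (1 / pi) * (ennreal (1 / s) * (\<integral>\<^sup>+u. G u * indicator S u \<partial>lborel) + G (x - s) + G (x + s))"
proof -
  have [measurable]: "f \<in> borel_measurable borel"
    using holf by (rule holomorphic_on_UNIV_imp_borel_measurable)
  define F where "F w = ennreal (cmod (f w))" for w
  have [measurable]: "F \<in> borel_measurable borel"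
    unfolding F_def by measurable
  have G_eq: "G = (\<lambda>u. \<integral>\<^sup>+v. F (Complex u v) \<partial>lborel)"
    by (simp add: G_def F_def)
  have [measurable]: "G \<in> borel_measurable borel"
    unfolding G_eq by measurable
  let ?I = "\<integral>\<^sup>+u. G u * indicator S u \<partial>lborel"
  define B T L R where
    "B y = (\<integral>\<^sup>+t. F (Complex (x - s + 2 * s * t) (y - s)) * indicator {0..1} t \<partial>lborel)" and
    "T y = (\<integral>\<^sup>+t. F (Complex (x - s + 2 * s * t) (y + s)) * indicator {0..1} t \<partial>lborel)" and
    "L y = (\<integral>\<^sup>+t. F (Complex (x - s) (y - s + 2 * s * t)) * indicator {0..1} t \<partial>lborel)" and
    "R y = (\<integral>\<^sup>+t. F (Complex (x + s) (y - s + 2 * s * t)) * indicator {0..1} t \<partial>lborel)"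
    for y
  have [measurable]: "B \<in> borel_measurable borel" "T \<in> borel_measurable borel"
      "L \<in> borel_measurable borel" "R \<in> borel_measurable borel"
    unfolding B_def T_def L_def R_def by measurable
  have horizontal: "(\<integral>\<^sup>+t. G (x - s + 2 * s * t) * indicator {0..1} t \<partial>lborel) \<le> ennreal (1 / (2 * s)) * ?I"
    using nn_integral_affine_unit_interval_le[of G S "2 * s" "x - s"] assms(3,5)
    by (simp add: min_def max_def add.commute)
  have unit_interval: "(\<integral>\<^sup>+t. indicator {0..1::real} t * c \<partial>lborel) = c" for c
    by (subst mult.commute) (simp add: nn_integral_cmult_indicator)
  have "(\<integral>\<^sup>+y. B y \<partial>lborel) = (\<integral>\<^sup>+t. G (x - s + 2 * s * t) * indicator {0..1} t \<partial>lborel)"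
      "(\<integral>\<^sup>+y. T y \<partial>lborel) = (\<integral>\<^sup>+t. G (x - s + 2 * s * t) * indicator {0..1} t \<partial>lborel)"
      "(\<integral>\<^sup>+y. L y \<partial>lborel) = G (x - s)" "(\<integral>\<^sup>+y. R y \<partial>lborel) = G (x + s)"
    using nn_integral_vertical_translate[of F "\<lambda>t. x - s + 2 * s * t" "\<lambda>t. - s"]
      nn_integral_vertical_translate[of F "\<lambda>t. x - s + 2 * s * t" "\<lambda>t. s"]
      nn_integral_vertical_translate[of F "\<lambda>t. x - s" "\<lambda>t. 2 * s * t - s"]
      nn_integral_vertical_translate[of F "\<lambda>t. x + s" "\<lambda>t. 2 * s * t - s"]
    by (simp_all add: B_def T_def L_def R_def G_eq unit_interval algebra_simps)
  then have edges: "(\<integral>\<^sup>+y. B y + T y + L y + R y \<partial>lborel)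
      \<le> ennreal (1 / (2 * s)) * ?I + ennreal (1 / (2 * s)) * ?I + G (x - s) + G (x + s)"
    using horizontal by (simp add: nn_integral_add add_mono)
  have "(\<integral>\<^sup>+y. ennreal (cmod (f (Complex x y))) \<partial>lborel)
      \<le> (\<integral>\<^sup>+y. ennreal (1 / pi) * (B y + T y + L y + R y) \<partial>lborel)"
    unfolding B_def T_def L_def R_def F_def
    by (intro nn_integral_mono ennreal_norm_le_square_boundary_nn_integrals holf \<open>s > 0\<close>)
  also have "\<dots> = ennreal (1 / pi) * (\<integral>\<^sup>+y. B y + T y + L y + R y \<partial>lborel)"
    by (simp add: nn_integral_cmult)
  also have "\<dots> \<le> ennreal (1 / pi) * (ennreal (1 / (2 * s)) * ?I + ennreal (1 / (2 * s)) * ?I + G (x - s) + G (x + s))"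
    using edges by (rule mult_left_mono) simp
  also have "ennreal (1 / (2 * s)) * ?I + ennreal (1 / (2 * s)) * ?I = ennreal (1 / s) * ?I"
    using \<open>s > 0\<close> by (simp flip: distrib_right ennreal_plus)
  finally show ?thesis
    by (simp add: add.assoc)
qed

lemma holomorphic_vertical_line_nn_integral_finite:
  fixes f :: "complex \<Rightarrow> complex"
  defines "G \<equiv> \<lambda>u. \<integral>\<^sup>+v. ennreal (cmod (f (Complex u v))) \<partial>lborel"
  assumes holf: "f holomorphic_on UNIV" and "a < x" "x < b"
    and strip: "(\<integral>\<^sup>+u. G u * indicator {a..b} u \<partial>lborel) < \<infinity>"
  shows "(\<integral>\<^sup>+y. ennreal (cmod (f (Complex x y))) \<partial>lborel) < \<infinity>"
proof -
  have [measurable]: "f \<in> borel_measurable borel"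
    using holf by (rule holomorphic_on_UNIV_imp_borel_measurable)
  have [measurable]: "G \<in> borel_measurable borel"
    unfolding G_def by measurable
  define \<delta> where "\<delta> = min (x - a) (b - x)"
  have "\<delta> > 0"
    using \<open>a < x\<close> \<open>x < b\<close> by (simp add: \<delta>_def)
  let ?I = "\<integral>\<^sup>+u. G u * indicator {a..b} u \<partial>lborel"
  have "{min x (x + \<delta>)..max x (x + \<delta>)} \<subseteq> {a..b}" "{min x (x + - \<delta>)..max x (x + - \<delta>)} \<subseteq> {a..b}"
    using \<open>\<delta> > 0\<close> by (auto simp: \<delta>_def)
  then have "(\<integral>\<^sup>+t. G (x + \<delta> * t) * indicator {0..1} t \<partial>lborel) \<le> ennreal (1 / \<delta>) * ?I"
      "(\<integral>\<^sup>+t. G (x + - \<delta> * t) * indicator {0..1} t \<partial>lborel) \<le> ennreal (1 / \<delta>) * ?I"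
    using nn_integral_affine_unit_interval_le[of G "{a..b}" \<delta> x]
      nn_integral_affine_unit_interval_le[of G "{a..b}" "- \<delta>" x] \<open>\<delta> > 0\<close>
    by simp_all
  then have "(\<integral>\<^sup>+t. (G (x + \<delta> * t) + G (x + - \<delta> * t)) * indicator {0..1} t \<partial>lborel)
      \<le> ennreal (1 / \<delta>) * ?I + ennreal (1 / \<delta>) * ?I"
    by (simp add: distrib_right nn_integral_add add_mono)
  also have "\<dots> < \<infinity>"
    using strip by (simp add: ennreal_mult_less_top)
  finally have "(\<integral>\<^sup>+t. (G (x + \<delta> * t) + G (x + - \<delta> * t)) * indicator {0..1} t \<partial>lborel) < \<infinity>" .
  then obtain t where "0 < t" "t < 1" and finite_sum: "G (x + \<delta> * t) + G (x + - \<delta> * t) < \<infinity>"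
    by (rule ex_finite_value_if_nn_integral_unit_interval_finite)
  define s where "s = \<delta> * t"
  have "s > 0" "s \<le> \<delta>"
    using \<open>\<delta> > 0\<close> \<open>0 < t\<close> \<open>t < 1\<close> by (simp_all add: s_def)
  moreover have "\<delta> \<le> x - a" "\<delta> \<le> b - x"
    by (simp_all add: \<delta>_def)
  ultimately have "s > 0" and s_strip: "{x - s..x + s} \<subseteq> {a..b}"
    by auto
  have "G (x - s) < \<infinity>" "G (x + s) < \<infinity>"
    using finite_sum by (simp_all add: s_def)
  have "(\<integral>\<^sup>+y. ennreal (cmod (f (Complex x y))) \<partial>lborel)
      \<le> ennreal (1 / pi) * (ennreal (1 / s) * ?I + G (x - s) + G (x + s))"
    unfolding G_def using nn_integral_vertical_line_le[OF holf \<open>s > 0\<close> _ s_strip] by simp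
  also have "\<dots> < \<infinity>"
    using strip \<open>G (x - s) < \<infinity>\<close> \<open>G (x + s) < \<infinity>\<close> by (simp add: ennreal_mult_less_top)
  finally show ?thesis .
qed

lemma Bargmann_strip_nn_integral_finite:
  assumes "\<phi> \<in> Bargmann"
  shows "(\<integral>\<^sup>+u. (\<integral>\<^sup>+v. ennreal ((cmod (\<phi> (Complex u v)))\<^sup>2 * exp (u\<^sup>2 - v\<^sup>2)) \<partial>lborel)
      * indicator {a..b} u \<partial>lborel) < \<infinity>"
proof -
  have [measurable]: "\<phi> \<in> borel_measurable borel"
    using assms by (simp add: Bargmann_def holomorphic_on_UNIV_imp_borel_measurable)
  let ?w = "\<lambda>z. (cmod (\<phi> z))\<^sup>2 * exp (- (cmod z)\<^sup>2)"
  have "(\<integral>\<^sup>+z. ennreal (?w z) \<partial>lborel) < \<infinity>"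
    using assms by (simp add: Bargmann_def integrable_iff_bounded)
  then have total: "(\<integral>\<^sup>+u. (\<integral>\<^sup>+v. ennreal (?w (Complex u v)) \<partial>lborel) \<partial>lborel) < \<infinity>"
    by (simp add: nn_integral_lborel_complex)
  define C where "C = exp (2 * (\<bar>a\<bar> + \<bar>b\<bar>)\<^sup>2)"
  have weight: "exp (u\<^sup>2 - v\<^sup>2) \<le> C * exp (- (cmod (Complex u v))\<^sup>2)" if "u \<in> {a..b}" for u v
  proof -
    have "u\<^sup>2 \<le> (\<bar>a\<bar> + \<bar>b\<bar>)\<^sup>2"
      using that by (auto simp: abs_le_square_iff[symmetric])
    then have "exp (u\<^sup>2 - v\<^sup>2) \<le> exp (2 * (\<bar>a\<bar> + \<bar>b\<bar>)\<^sup>2 + (- u\<^sup>2 - v\<^sup>2))"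
      by simp
    then show ?thesis
      by (simp add: C_def complex_norm exp_add)
  qed
  have "(\<integral>\<^sup>+u. (\<integral>\<^sup>+v. ennreal ((cmod (\<phi> (Complex u v)))\<^sup>2 * exp (u\<^sup>2 - v\<^sup>2)) \<partial>lborel)
      * indicator {a..b} u \<partial>lborel)
      \<le> (\<integral>\<^sup>+u. ennreal C * (\<integral>\<^sup>+v. ennreal (?w (Complex u v)) \<partial>lborel) \<partial>lborel)"
  proof (intro nn_integral_mono)
    fix u :: real
    have "(\<integral>\<^sup>+v. ennreal ((cmod (\<phi> (Complex u v)))\<^sup>2 * exp (u\<^sup>2 - v\<^sup>2)) \<partial>lborel)
        \<le> (\<integral>\<^sup>+v. ennreal C * ennreal (?w (Complex u v)) \<partial>lborel)" if "u \<in> {a..b}"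
      using weight[OF that] by (intro nn_integral_mono)
        (simp add: ennreal_mult[symmetric] C_def mult_left_mono mult.left_commute)
    then show "(\<integral>\<^sup>+v. ennreal ((cmod (\<phi> (Complex u v)))\<^sup>2 * exp (u\<^sup>2 - v\<^sup>2)) \<partial>lborel)
        * indicator {a..b} u \<le> ennreal C * (\<integral>\<^sup>+v. ennreal (?w (Complex u v)) \<partial>lborel)"
      by (simp add: indicator_def nn_integral_cmult)
  qed
  also have "\<dots> < \<infinity>"
    using total by (simp add: nn_integral_cmult ennreal_mult_less_top)
  finally show ?thesis .
qed

theorem lemma4p1:
  fixes \<phi> :: "complex \<Rightarrow> complex" and x :: real
  assumes "\<phi> \<in> Bargmann"
  shows "integrable lborel (\<lambda>y::real. (cmod (\<phi> (Complex x y)))\<^sup>2 * exp (- y\<^sup>2))"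
proof -
  have hol\<phi>: "\<phi> holomorphic_on UNIV"
    using assms by (simp add: Bargmann_def)
  define f where "f w = (\<phi> w * exp (w\<^sup>2 / 2))\<^sup>2" for w
  have norm_f: "cmod (f (Complex u v)) = (cmod (\<phi> (Complex u v)))\<^sup>2 * exp (u\<^sup>2 - v\<^sup>2)" for u v
    by (simp add: f_def norm_power norm_mult norm_exp_eq_Re power2_eq_square
        power_mult_distrib exp_add[symmetric] field_simps)
  have holf: "f holomorphic_on UNIV"
    unfolding f_def by (intro holomorphic_intros hol\<phi>) simp
  then have [measurable]: "f \<in> borel_measurable borel"
    by (rule holomorphic_on_UNIV_imp_borel_measurable)
  have "(\<integral>\<^sup>+u. (\<integral>\<^sup>+v. ennreal (cmod (f (Complex u v))) \<partial>lborel) * indicator {x - 1..x + 1} u \<partial>lborel) < \<infinity>"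
    using Bargmann_strip_nn_integral_finite[OF assms] by (simp add: norm_f)
  with holf have line: "(\<integral>\<^sup>+y. ennreal (cmod (f (Complex x y))) \<partial>lborel) < \<infinity>"
    using holomorphic_vertical_line_nn_integral_finite[of f "x - 1" x "x + 1"] by simp
  have integrand: "(cmod (\<phi> (Complex x y)))\<^sup>2 * exp (- y\<^sup>2) = exp (- x\<^sup>2) * cmod (f (Complex x y))" for y
    by (simp add: norm_f exp_diff exp_minus field_simps)
  show ?thesis
    unfolding integrand integrable_iff_bounded
    using line by (simp add: nn_integral_cmult ennreal_mult ennreal_mult_less_top)
qed

end
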